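(* Assume the standing assumptions in the context and in addition $r>0$. Fix $j\in\{1,2\}$ and consider the equation $$\rho v_j(x)=H(x,y_j,Dv_j(x)),\qquad x\ge\underline{x}.$$ The function $\check{\mathsf{u}}_j(x)=\frac{1}{\rho}\frac{(rx+y_j)^{1-\gamma}}{1-\gamma}$ is a viscosity subsolution of this equation on $[\underline{x},+\infty)$, and the function $$\check{\mathsf{v}}_j(x)=\Big(\frac{\rho-r}{\gamma}+r\Big)^{-\gamma}\frac{(x+y_j/r)^{1-\gamma}}{1-\gamma}$$ is a viscosity supersolution of this equation on $(\underline{x},+\infty)$.
   Context: Standing assumptions: $\rho>0$; $-\infty<r<\rho$; $0<y_1<y_2$; $\gamma>1$; $\underline{x}\le0$ with $\rho\underline{x}+y_j>0$ for $j=1,2$. Utility $u(c)=\frac{c^{1-\gamma}}{1-\gamma}$; Hamiltonian $H(x,y_j,p)=\sup_{c\ge0}\{u(c)+(rx+y_j-c)p\}$, equal to $(rx+y_j)p+\frac{\gamma}{1-\gamma}p^{1-1/\gamma}$ for $p\ge0$ and $+\infty$ for $p<0$. A u.s.c. $w$ is a viscosity subsolution on $S\subseteq[\underline{x},\infty)$ if whenever $\varphi$ smooth and $w-\varphi$ has a local max (relative to $[\underline{x},\infty)$) at $x_0\in S$, then $\rho w(x_0)\le H(x_0,y_j,D\varphi(x_0))$; an l.s.c. $w$ is a viscosity supersolution on $S$ if at local minima $x_0\in S$ of $w-\varphi$, $\rho w(x_0)\ge H(x_0,y_j,D\varphi(x_0))$. *)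

theory Defs
  imports "HOL-Analysis.Analysis"
begin

text \<open>CRRA utility u(c) = c^(1-gamma)/(1-gamma) with gamma > 1, valued in the extended reals;
  u(0) = -infinity (the limit as c tends to 0 when gamma > 1).\<close>
definition crra_u :: "real \<Rightarrow> real \<Rightarrow> ereal" where
  "crra_u \<gamma> c = (if c > 0 then ereal (c powr (1 - \<gamma>) / (1 - \<gamma>)) else -\<infinity>)"

definition hamiltonian :: "real \<Rightarrow> real \<Rightarrow> real \<Rightarrow> real \<Rightarrow> real \<Rightarrow> ereal" where
  "hamiltonian \<gamma> r x y p = (SUP c\<in>{0..}. crra_u \<gamma> c + ereal ((r * x + y - c) * p))"

definition test_fun :: "(real \<Rightarrow> real) \<Rightarrow> bool" where
  "test_fun \<phi> \<longleftrightarrow> (\<exists>\<phi>'. (\<forall>x. (\<phi> has_real_derivative \<phi>' x) (at x)) \<and> continuous_on UNIV \<phi>')"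

definition usc_on :: "real set \<Rightarrow> (real \<Rightarrow> real) \<Rightarrow> bool" where
  "usc_on D w \<longleftrightarrow> (\<forall>x0\<in>D. \<forall>e>0. \<exists>d>0. \<forall>x\<in>D. \<bar>x - x0\<bar> < d \<longrightarrow> w x < w x0 + e)"

definition lsc_on :: "real set \<Rightarrow> (real \<Rightarrow> real) \<Rightarrow> bool" where
  "lsc_on D w \<longleftrightarrow> (\<forall>x0\<in>D. \<forall>e>0. \<exists>d>0. \<forall>x\<in>D. \<bar>x - x0\<bar> < d \<longrightarrow> w x > w x0 - e)"

definition loc_max_rel :: "real \<Rightarrow> (real \<Rightarrow> real) \<Rightarrow> real \<Rightarrow> bool" where
  "loc_max_rel xlow f x0 \<longleftrightarrow> (\<exists>e>0. \<forall>x\<in>{xlow..}. \<bar>x - x0\<bar> < e \<longrightarrow> f x \<le> f x0)"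

definition loc_min_rel :: "real \<Rightarrow> (real \<Rightarrow> real) \<Rightarrow> real \<Rightarrow> bool" where
  "loc_min_rel xlow f x0 \<longleftrightarrow> (\<exists>e>0. \<forall>x\<in>{xlow..}. \<bar>x - x0\<bar> < e \<longrightarrow> f x \<ge> f x0)"

definition visc_sub :: "real \<Rightarrow> real \<Rightarrow> real \<Rightarrow> real \<Rightarrow> real \<Rightarrow> real set \<Rightarrow> (real \<Rightarrow> real) \<Rightarrow> bool" where
  "visc_sub \<rho> r \<gamma> y xlow S w \<longleftrightarrow> usc_on {xlow..} w \<and>
     (\<forall>\<phi> x0. test_fun \<phi> \<longrightarrow> x0 \<in> S \<longrightarrow> loc_max_rel xlow (\<lambda>x. w x - \<phi> x) x0 \<longrightarrow>
        ereal (\<rho> * w x0) \<le> hamiltonian \<gamma> r x0 y (deriv \<phi> x0))"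

definition visc_super :: "real \<Rightarrow> real \<Rightarrow> real \<Rightarrow> real \<Rightarrow> real \<Rightarrow> real set \<Rightarrow> (real \<Rightarrow> real) \<Rightarrow> bool" where
  "visc_super \<rho> r \<gamma> y xlow S w \<longleftrightarrow> lsc_on {xlow..} w \<and>
     (\<forall>\<phi> x0. test_fun \<phi> \<longrightarrow> x0 \<in> S \<longrightarrow> loc_min_rel xlow (\<lambda>x. w x - \<phi> x) x0 \<longrightarrow>
        ereal (\<rho> * w x0) \<ge> hamiltonian \<gamma> r x0 y (deriv \<phi> x0))"

end

theory Submission
  imports Defs
begin

text \<open>
  Subsolution: choosing the consumption c = r x + y_j in the supremum defining H gives
  H(x, y_j, p) \<ge> u(r x + y_j) = \<rho> u_j(x) for every p.

  Supersolution: v_j is smooth on the open half-line, so a test function touching it from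
  below at an interior point has the derivative p = v_j'(x) there. Young's inequality for the
  CRRA utility, sup over c of (u(c) - c p) = \<gamma>/(1-\<gamma>) p^(1-1/\<gamma>), then shows that
  \<rho> v_j \<ge> H(x, y_j, v_j'(x)) pointwise, which is the supersolution inequality.
\<close>

lemma powr_ge_one_plus_neg_exponent:
  fixes t a :: real
  assumes "t > 0" "a < 0"
  shows "1 + a * (t - 1) \<le> t powr a"
proof -
  have "a * (t - 1) \<le> a * ln t"
    using ln_le_minus_one[OF \<open>t > 0\<close>] \<open>a < 0\<close> by (simp add: mult_left_mono_neg)
  also have "1 + a * ln t \<le> exp (a * ln t)" by (rule exp_ge_add_one_self)
  also have "exp (a * ln t) = t powr a" using \<open>t > 0\<close> by (simp add: powr_def)
  finally show ?thesis by linarith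
qed

text \<open>The maximum over c is attained at c = a, where u'(c) = a powr - \<gamma>.\<close>
lemma crra_young_inequality:
  fixes a c \<gamma> :: real
  assumes "a > 0" "c > 0" "\<gamma> > 1"
  shows "c powr (1 - \<gamma>) / (1 - \<gamma>) - c * a powr (- \<gamma>) \<le> \<gamma> / (1 - \<gamma>) * a powr (1 - \<gamma>)"
proof -
  define t where "t = c / a"
  have "t > 0" "c = a * t" using assms by (simp_all add: t_def)
  have "\<gamma> + (1 - \<gamma>) * t \<le> t powr (1 - \<gamma>)"
    using powr_ge_one_plus_neg_exponent[OF \<open>t > 0\<close>, of "1 - \<gamma>"] assms by (simp add: algebra_simps)
  then have "t powr (1 - \<gamma>) / (1 - \<gamma>) \<le> (\<gamma> + (1 - \<gamma>) * t) / (1 - \<gamma>)"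
    using assms by (intro divide_right_mono_neg) auto
  also have "\<dots> = \<gamma> / (1 - \<gamma>) + t"
    using assms by (simp add: field_simps)
  finally have "t powr (1 - \<gamma>) / (1 - \<gamma>) - t \<le> \<gamma> / (1 - \<gamma>)"
    by simp
  then have "a powr (1 - \<gamma>) * (t powr (1 - \<gamma>) / (1 - \<gamma>) - t) \<le> a powr (1 - \<gamma>) * (\<gamma> / (1 - \<gamma>))"
    by (intro mult_left_mono) auto
  moreover have "c powr (1 - \<gamma>) = a powr (1 - \<gamma>) * t powr (1 - \<gamma>)"
    using \<open>c = a * t\<close> \<open>t > 0\<close> assms by (simp add: powr_mult)
  moreover have "c * a powr (- \<gamma>) = a powr (1 - \<gamma>) * t"
    using \<open>c = a * t\<close> assms by (simp add: powr_diff powr_minus field_simps)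
  ultimately show ?thesis by (simp add: algebra_simps)
qed

lemma hamiltonian_ge_consumption:
  assumes "c > 0"
  shows "crra_u \<gamma> c + ereal ((r * x + y - c) * p) \<le> hamiltonian \<gamma> r x y p"
  unfolding hamiltonian_def using assms by (intro SUP_upper) auto

lemma hamiltonian_powr_le:
  fixes a \<gamma> r x y :: real
  assumes "a > 0" "\<gamma> > 1"
  shows "hamiltonian \<gamma> r x y (a powr (- \<gamma>))
           \<le> ereal ((r * x + y) * a powr (- \<gamma>) + \<gamma> / (1 - \<gamma>) * a powr (1 - \<gamma>))"
  unfolding hamiltonian_def
proof (rule SUP_least)
  fix c :: real
  show "crra_u \<gamma> c + ereal ((r * x + y - c) * a powr - \<gamma>)
      \<le> ereal ((r * x + y) * a powr - \<gamma> + \<gamma> / (1 - \<gamma>) * a powr (1 - \<gamma>))"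
  proof (cases "c > 0")
    case True
    then show ?thesis
      using crra_young_inequality[OF \<open>a > 0\<close> True \<open>\<gamma> > 1\<close>] by (simp add: crra_u_def algebra_simps)
  qed (simp add: crra_u_def)
qed

lemma continuous_on_imp_usc_on: "continuous_on D w \<Longrightarrow> usc_on D w"
  and continuous_on_imp_lsc_on: "continuous_on D w \<Longrightarrow> lsc_on D w"
  unfolding usc_on_def lsc_on_def continuous_on_iff dist_real_def
  by (metis abs_diff_less_iff)+

lemma loc_min_rel_deriv_eq:
  assumes "xlow < x0" and "(w has_real_derivative D) (at x0)" and "test_fun \<phi>"
    and "loc_min_rel xlow (\<lambda>x. w x - \<phi> x) x0"
  shows "deriv \<phi> x0 = D"
proof -
  obtain \<phi>' where \<phi>': "\<And>x. (\<phi> has_real_derivative \<phi>' x) (at x)"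
    using \<open>test_fun \<phi>\<close> unfolding test_fun_def by auto
  obtain e where "e > 0" and e: "\<forall>x\<in>{xlow..}. \<bar>x - x0\<bar> < e \<longrightarrow> w x0 - \<phi> x0 \<le> w x - \<phi> x"
    using assms(4) unfolding loc_min_rel_def by auto
  have "D - \<phi>' x0 = 0"
  proof (rule DERIV_local_min[where f = "\<lambda>x. w x - \<phi> x"])
    show "((\<lambda>x. w x - \<phi> x) has_real_derivative D - \<phi>' x0) (at x0)"
      using assms(2) \<phi>' by (rule DERIV_diff)
    show "0 < min e (x0 - xlow)" using \<open>e > 0\<close> \<open>xlow < x0\<close> by auto
    show "\<forall>y. \<bar>x0 - y\<bar> < min e (x0 - xlow) \<longrightarrow> w x0 - \<phi> x0 \<le> w y - \<phi> y"
      using e by (auto simp: abs_minus_commute)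
  qed
  then show ?thesis using DERIV_imp_deriv[OF \<phi>'] by simp
qed

lemma visc_sub_if_below_hamiltonian:
  assumes "continuous_on {xlow..} w"
    and "\<And>x p. x \<ge> xlow \<Longrightarrow> ereal (\<rho> * w x) \<le> hamiltonian \<gamma> r x y p"
  shows "visc_sub \<rho> r \<gamma> y xlow {xlow..} w"
  using assms by (simp add: visc_sub_def continuous_on_imp_usc_on)

lemma visc_super_if_classical_super:
  assumes "continuous_on {xlow..} w"
    and "\<And>x. x > xlow \<Longrightarrow> (w has_real_derivative w' x) (at x)"
    and "\<And>x. x > xlow \<Longrightarrow> hamiltonian \<gamma> r x y (w' x) \<le> ereal (\<rho> * w x)"
  shows "visc_super \<rho> r \<gamma> y xlow {xlow<..} w"
  unfolding visc_super_def
proof (intro conjI allI impI)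
  show "lsc_on {xlow..} w" using assms(1) by (rule continuous_on_imp_lsc_on)
next
  fix \<phi> x0
  assume "test_fun \<phi>" "x0 \<in> {xlow<..}" "loc_min_rel xlow (\<lambda>x. w x - \<phi> x) x0"
  then have "deriv \<phi> x0 = w' x0" using assms(2) by (auto intro: loc_min_rel_deriv_eq)
  then show "hamiltonian \<gamma> r x0 y (deriv \<phi> x0) \<le> ereal (\<rho> * w x0)"
    using assms(3) \<open>x0 \<in> {xlow<..}\<close> by simp
qed

lemma crra_visc_sub:
  fixes \<rho> r \<gamma> y xlow :: real
  assumes "\<rho> > 0" and "\<gamma> > 1" and pos: "\<And>x. x \<ge> xlow \<Longrightarrow> r * x + y > 0"
  shows "visc_sub \<rho> r \<gamma> y xlow {xlow..} (\<lambda>x. (1 / \<rho>) * ((r * x + y) powr (1 - \<gamma>) / (1 - \<gamma>)))"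
proof (rule visc_sub_if_below_hamiltonian)
  show "continuous_on {xlow..} (\<lambda>x. (1 / \<rho>) * ((r * x + y) powr (1 - \<gamma>) / (1 - \<gamma>)))"
    using pos assms(1,2) by (auto intro!: continuous_intros simp: less_imp_neq[symmetric])
next
  fix x p :: real
  assume "x \<ge> xlow"
  then have "r * x + y > 0" by (rule pos)
  then show "ereal (\<rho> * ((1 / \<rho>) * ((r * x + y) powr (1 - \<gamma>) / (1 - \<gamma>)))) \<le> hamiltonian \<gamma> r x y p"
    using hamiltonian_ge_consumption[of "r * x + y" \<gamma> r x y p] \<open>\<rho> > 0\<close> by (simp add: crra_u_def)
qed

lemma has_real_derivative_crra_scaled:
  fixes A \<gamma> k x :: real
  assumes "A > 0" "\<gamma> > 1" "x + k > 0"
  shows "((\<lambda>x. A powr (- \<gamma>) * ((x + k) powr (1 - \<gamma>) / (1 - \<gamma>)))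
           has_real_derivative (A * (x + k)) powr (- \<gamma>)) (at x)"
proof -
  have "((\<lambda>x. (x + k) powr (1 - \<gamma>)) has_real_derivative (1 - \<gamma>) * (x + k) powr (- \<gamma>)) (at x)"
    using DERIV_fun_powr[of "\<lambda>x. x + k" 1 x "1 - \<gamma>"] assms(3)
    by (auto intro!: derivative_eq_intros)
  then have "((\<lambda>x. A powr (- \<gamma>) * ((x + k) powr (1 - \<gamma>) / (1 - \<gamma>)))
      has_real_derivative A powr (- \<gamma>) * ((1 - \<gamma>) * (x + k) powr (- \<gamma>) / (1 - \<gamma>))) (at x)"
    by (intro DERIV_cmult DERIV_cdivide)
  then show ?thesis using assms by (simp add: powr_mult)
qed

text \<open>The constant A = (\<rho> - r)/\<gamma> + r is exactly the one for which r + \<gamma> A/(1 - \<gamma>) = \<rho>/(1 - \<gamma>).\<close>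
lemma hamiltonian_crra_candidate_le:
  fixes \<rho> r \<gamma> x y :: real
  defines "A \<equiv> (\<rho> - r) / \<gamma> + r"
  assumes "A > 0" "r > 0" "\<gamma> > 1" "x + y / r > 0"
  shows "hamiltonian \<gamma> r x y ((A * (x + y / r)) powr (- \<gamma>))
           \<le> ereal (\<rho> * (A powr (- \<gamma>) * ((x + y / r) powr (1 - \<gamma>) / (1 - \<gamma>))))"
proof -
  define z where "z = x + y / r"
  define M where "M = A powr (- \<gamma>) * z powr (1 - \<gamma>)"
  have "z > 0" using assms(5) by (simp add: z_def)
  have "r * x + y = r * z" using \<open>r > 0\<close> by (simp add: z_def field_simps)
  moreover have "z * (A * z) powr (- \<gamma>) = M" and "(A * z) powr (1 - \<gamma>) = A * M"
    using \<open>A > 0\<close> \<open>z > 0\<close> by (simp_all add: M_def powr_mult powr_diff powr_minus field_simps)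
  ultimately have "(r * x + y) * (A * z) powr (- \<gamma>) + \<gamma> / (1 - \<gamma>) * (A * z) powr (1 - \<gamma>)
      = (r + \<gamma> * A / (1 - \<gamma>)) * M"
    by (simp add: algebra_simps)
  also have "r + \<gamma> * A / (1 - \<gamma>) = \<rho> / (1 - \<gamma>)"
    using \<open>\<gamma> > 1\<close> by (simp add: A_def field_simps)
  finally have "(r * x + y) * (A * z) powr (- \<gamma>) + \<gamma> / (1 - \<gamma>) * (A * z) powr (1 - \<gamma>)
      = \<rho> * (M / (1 - \<gamma>))"
    by simp
  then show ?thesis
    using hamiltonian_powr_le[of "A * z" \<gamma> r x y] \<open>A > 0\<close> \<open>z > 0\<close> \<open>\<gamma> > 1\<close>
    by (simp add: M_def z_def)
qed

lemma crra_visc_super: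
  fixes \<rho> r \<gamma> y xlow :: real
  assumes "r > 0" and "r < \<rho>" and "\<gamma> > 1" and pos: "\<And>x. x \<ge> xlow \<Longrightarrow> x + y / r > 0"
  shows "visc_super \<rho> r \<gamma> y xlow {xlow<..}
           (\<lambda>x. ((\<rho> - r) / \<gamma> + r) powr (- \<gamma>) * ((x + y / r) powr (1 - \<gamma>) / (1 - \<gamma>)))"
proof (rule visc_super_if_classical_super)
  define A where "A = (\<rho> - r) / \<gamma> + r"
  have "A > 0" using assms(1-3) by (simp add: A_def add_pos_pos)
  show "continuous_on {xlow..} (\<lambda>x. ((\<rho> - r) / \<gamma> + r) powr (- \<gamma>) * ((x + y / r) powr (1 - \<gamma>) / (1 - \<gamma>)))"
    using pos \<open>\<gamma> > 1\<close> by (auto intro!: continuous_intros simp: less_imp_neq[symmetric])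
  fix x :: real
  assume "x > xlow"
  then have "x + y / r > 0" using pos by simp
  then show "((\<lambda>x. ((\<rho> - r) / \<gamma> + r) powr (- \<gamma>) * ((x + y / r) powr (1 - \<gamma>) / (1 - \<gamma>)))
      has_real_derivative (A * (x + y / r)) powr (- \<gamma>)) (at x)"
    and "hamiltonian \<gamma> r x y ((A * (x + y / r)) powr (- \<gamma>))
      \<le> ereal (\<rho> * (((\<rho> - r) / \<gamma> + r) powr (- \<gamma>) * ((x + y / r) powr (1 - \<gamma>) / (1 - \<gamma>))))"
    using has_real_derivative_crra_scaled[OF \<open>A > 0\<close> \<open>\<gamma> > 1\<close>]
      hamiltonian_crra_candidate_le[of \<rho> r \<gamma> x y] \<open>A > 0\<close> assms(1,3)
    by (simp_all add: A_def)
qed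

theorem mainTheorem7:
  fixes \<rho> r \<gamma> y1 y2 xlow :: real and j :: nat
  assumes "\<rho> > 0" and "r < \<rho>" and "r > 0"
    and "0 < y1" and "y1 < y2" and "\<gamma> > 1"
    and "xlow \<le> 0" and "\<rho> * xlow + y1 > 0" and "\<rho> * xlow + y2 > 0"
    and "j \<in> {1, 2}"
  defines "yj \<equiv> (if j = 1 then y1 else y2)"
  shows "visc_sub \<rho> r \<gamma> yj xlow {xlow..}
           (\<lambda>x. (1 / \<rho>) * ((r * x + yj) powr (1 - \<gamma>) / (1 - \<gamma>)))
       \<and> visc_super \<rho> r \<gamma> yj xlow {xlow<..}
           (\<lambda>x. ((\<rho> - r) / \<gamma> + r) powr (- \<gamma>) * ((x + yj / r) powr (1 - \<gamma>) / (1 - \<gamma>)))"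
proof -
  have wealth_pos: "r * x + yj > 0" if "x \<ge> xlow" for x
  proof -
    have "\<rho> * xlow \<le> r * xlow" using assms(2,7) by (intro mult_right_mono_neg) auto
    also have "\<dots> \<le> r * x" using that assms(3) by simp
    finally show ?thesis using assms(8,9) by (auto simp: yj_def)
  qed
  moreover have "x + yj / r > 0" if "x \<ge> xlow" for x
    using wealth_pos[OF that] assms(3) by (simp add: field_simps)
  ultimately show ?thesis
    using crra_visc_sub[OF assms(1,6)] crra_visc_super[OF assms(3,2,6)] by blast
qed

end
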